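(* Let $A$ be a physical system of dimension $m$ with Hamiltonian $H^A$ and an orthonormal energy eigenbasis $\{|x\rangle\}_{x=1}^m$. Let $\sigma$ be an arbitrary density matrix on $A$ and $p_x\coloneqq\langle x|\sigma|x\rangle$. Then the pure state $|\psi\rangle\coloneqq\sum_{x=1}^m\sqrt{p_x}|x\rangle$ can be converted to $\sigma$ by a time-translation covariant channel, i.e. there exists a time-translation covariant channel $\mathcal{E}:A\to A$ with $\mathcal{E}(|\psi\rangle\langle\psi|)=\sigma$.
   Context: A channel (CPTP map) $\mathcal{E}:A\to A$ is time-translation covariant if $\mathcal{E}(e^{-iH^At}\rho e^{iH^At})=e^{-iH^At}\mathcal{E}(\rho)e^{iH^At}$ for all $t\in\mathbb{R}$ and all states $\rho$ on $A$. *)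

theory Defs
  imports Complex_Main "Jordan_Normal_Form.Matrix"
begin

definition adj :: "complex mat \<Rightarrow> complex mat" where
  "adj A = mat (dim_col A) (dim_row A) (\<lambda>(i,j). cnj (A $$ (j,i)))"

definition mtrace :: "complex mat \<Rightarrow> complex" where
  "mtrace A = (\<Sum>i<dim_row A. A $$ (i,i))"

definition hermitian_mat :: "nat \<Rightarrow> complex mat \<Rightarrow> bool" where
  "hermitian_mat n A \<longleftrightarrow> A \<in> carrier_mat n n \<and> adj A = A"

definition unitary_mat :: "nat \<Rightarrow> complex mat \<Rightarrow> bool" where
  "unitary_mat n U \<longleftrightarrow> U \<in> carrier_mat n n \<and> adj U * U = 1\<^sub>m n \<and> U * adj U = 1\<^sub>m n"

definition psd_mat :: "nat \<Rightarrow> complex mat \<Rightarrow> bool" where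
  "psd_mat n A \<longleftrightarrow> A \<in> carrier_mat n n \<and>
     (\<forall>v \<in> carrier_vec n. (\<Sum>i<n. \<Sum>j<n. cnj (v $ i) * A $$ (i,j) * v $ j) \<in> \<real> \<and>
                            0 \<le> Re (\<Sum>i<n. \<Sum>j<n. cnj (v $ i) * A $$ (i,j) * v $ j))"

definition density_mat :: "nat \<Rightarrow> complex mat \<Rightarrow> bool" where
  "density_mat n \<rho> \<longleftrightarrow> psd_mat n \<rho> \<and> mtrace \<rho> = 1"

definition mexp :: "complex mat \<Rightarrow> complex mat" where
  "mexp A = mat (dim_row A) (dim_col A) (\<lambda>(i,j). \<Sum>k. (A ^\<^sub>m k) $$ (i,j) / of_nat (fact k))"

text \<open>(id_k \<otimes> E) applied to a (k*m)x(k*m) matrix, viewed as k x k blocks of m x m matrices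
  (ancilla index a, system index r, combined index a*m + r).\<close>
definition ext_map :: "nat \<Rightarrow> nat \<Rightarrow> (complex mat \<Rightarrow> complex mat) \<Rightarrow> complex mat \<Rightarrow> complex mat" where
  "ext_map k m E X = mat (k*m) (k*m) (\<lambda>(i,j).
      E (mat m m (\<lambda>(r,s). X $$ ((i div m) * m + r, (j div m) * m + s))) $$ (i mod m, j mod m))"

definition channel :: "nat \<Rightarrow> (complex mat \<Rightarrow> complex mat) \<Rightarrow> bool" where
  "channel m E \<longleftrightarrow>
     (\<forall>X \<in> carrier_mat m m. E X \<in> carrier_mat m m) \<and>
     (\<forall>X \<in> carrier_mat m m. \<forall>Y \<in> carrier_mat m m. \<forall>a b :: complex.
        E (a \<cdot>\<^sub>m X + b \<cdot>\<^sub>m Y) = a \<cdot>\<^sub>m E X + b \<cdot>\<^sub>m E Y) \<and>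
     (\<forall>X \<in> carrier_mat m m. mtrace (E X) = mtrace X) \<and>
     (\<forall>k X. psd_mat (k*m) X \<longrightarrow> psd_mat (k*m) (ext_map k m E X))"

definition time_evol :: "complex mat \<Rightarrow> real \<Rightarrow> complex mat" where
  "time_evol H t = mexp ((- \<i> * complex_of_real t) \<cdot>\<^sub>m H)"

definition time_cov :: "nat \<Rightarrow> complex mat \<Rightarrow> (complex mat \<Rightarrow> complex mat) \<Rightarrow> bool" where
  "time_cov m H E \<longleftrightarrow> (\<forall>t::real. \<forall>\<rho>. density_mat m \<rho> \<longrightarrow>
     E (time_evol H t * \<rho> * adj (time_evol H t)) = time_evol H t * E \<rho> * adj (time_evol H t))"

definition ket_bra :: "complex vec \<Rightarrow> complex mat" where
  "ket_bra v = mat (dim_vec v) (dim_vec v) (\<lambda>(i,j). v $ i * cnj (v $ j))"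

end

theory Submission
  imports Defs
begin

text \<open>
  In the energy eigenbasis the state is the positive semidefinite matrix \<open>S = U\<^sup>* \<sigma> U\<close>
  with diagonal \<open>p\<close>. A Gram decomposition \<open>S x y = \<Sum>\<^sub>l G\<^sub>l x cnj (G\<^sub>l y)\<close> yields
  \<open>h\<^sub>l x = G\<^sub>l x / sqrt (p x)\<close> with \<open>\<Sum>\<^sub>l |h\<^sub>l x|\<^sup>2 = 1\<close> (one extra index takes care of the
  \<open>x\<close> with \<open>p x = 0\<close>). The Kraus operators \<open>K\<^sub>l = U diag(h\<^sub>l) U\<^sup>*\<close> are diagonal in the energy
  eigenbasis, so they commute with every \<open>time_evol H t\<close> and the channel is covariant; and
  \<open>K\<^sub>l \<psi> = U G\<^sub>l\<close>, so the channel maps \<open>|\<psi>\<rangle>\<langle>\<psi>|\<close> to \<open>U S U\<^sup>* = \<sigma>\<close>.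
\<close>

section \<open>Positive semidefinite kernels\<close>

definition quad_form :: "nat \<Rightarrow> (nat \<Rightarrow> nat \<Rightarrow> complex) \<Rightarrow> (nat \<Rightarrow> complex) \<Rightarrow> complex" where
  "quad_form n A v = (\<Sum>i<n. \<Sum>j<n. cnj (v i) * A i j * v j)"

definition psd_kernel :: "nat \<Rightarrow> (nat \<Rightarrow> nat \<Rightarrow> complex) \<Rightarrow> bool" where
  "psd_kernel n A \<longleftrightarrow> (\<forall>v. quad_form n A v \<in> \<real> \<and> 0 \<le> Re (quad_form n A v))"

lemma psd_mat_iff_psd_kernel:
  "psd_mat n A \<longleftrightarrow> A \<in> carrier_mat n n \<and> psd_kernel n (\<lambda>i j. A $$ (i,j))"
proof -
  have as_vec: "quad_form n (\<lambda>i j. A $$ (i,j)) w =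
      (\<Sum>i<n. \<Sum>j<n. cnj (vec n w $ i) * A $$ (i,j) * vec n w $ j)" for w
    by (simp add: quad_form_def)
  have as_fun: "(\<Sum>i<n. \<Sum>j<n. cnj (v $ i) * A $$ (i,j) * v $ j) = quad_form n (\<lambda>i j. A $$ (i,j)) (($) v)" for v
    by (simp add: quad_form_def)
  show ?thesis
  proof
    assume psd: "psd_mat n A"
    have "quad_form n (\<lambda>i j. A $$ (i,j)) w \<in> \<real> \<and> 0 \<le> Re (quad_form n (\<lambda>i j. A $$ (i,j)) w)" for w
      using psd vec_carrier[of n w] unfolding psd_mat_def as_vec by blast
    then show "A \<in> carrier_mat n n \<and> psd_kernel n (\<lambda>i j. A $$ (i,j))"
      using psd unfolding psd_mat_def psd_kernel_def by blast
  next
    assume "A \<in> carrier_mat n n \<and> psd_kernel n (\<lambda>i j. A $$ (i,j))"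
    then show "psd_mat n A" unfolding psd_mat_def psd_kernel_def as_fun by blast
  qed
qed

lemma quad_form_cong:
  "(\<And>i. i < n \<Longrightarrow> v i = w i) \<Longrightarrow> (\<And>i j. i < n \<Longrightarrow> j < n \<Longrightarrow> A i j = B i j) \<Longrightarrow>
    quad_form n A v = quad_form n B w"
  unfolding quad_form_def by (intro sum.cong) auto

lemma psd_kernel_cong:
  assumes "\<And>i j. i < n \<Longrightarrow> j < n \<Longrightarrow> A i j = B i j"
  shows "psd_kernel n A \<longleftrightarrow> psd_kernel n B"
proof -
  have "quad_form n A v = quad_form n B v" for v by (rule quad_form_cong) (simp_all add: assms)
  then show ?thesis unfolding psd_kernel_def by simp
qed

lemma quad_form_Suc:
  "quad_form (Suc n) A w = quad_form n A w + (\<Sum>i<n. cnj (w i) * A i n) * w n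
     + cnj (w n) * (\<Sum>j<n. A n j * w j) + cnj (w n) * A n n * w n"
  by (simp add: quad_form_def sum.distrib sum_distrib_left sum_distrib_right algebra_simps)

lemma quad_form_unit_vector:
  assumes "i < n"
  shows "quad_form n A (\<lambda>k. if k = i then a else 0) = cnj a * A i i * a"
proof -
  have "quad_form n A (\<lambda>k. if k = i then a else 0) = (\<Sum>k<n. if k = i then cnj a * A i i * a else 0)"
    unfolding quad_form_def by (rule sum.cong) (auto simp: if_distrib cong: if_cong)
  then show ?thesis using assms by simp
qed

lemma sum_two_points:
  assumes "i < (n::nat)" "j < n" "i \<noteq> j"
  shows "(\<Sum>l<n. if l = i then x else if l = j then y else 0) = (x + y :: complex)"
proof -
  have "(\<Sum>l<n. if l = i then x else if l = j then y else 0) =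
        (\<Sum>l<n. (if l = i then x else 0) + (if l = j then y else 0))"
    by (rule sum.cong) (use assms in auto)
  also have "\<dots> = x + y" using assms by (simp add: sum.distrib)
  finally show ?thesis .
qed

lemma quad_form_two_point_vector:
  assumes "i < n" "j < n" "i \<noteq> j"
  shows "quad_form n A (\<lambda>k. if k = i then a else if k = j then b else 0) =
    cnj a * A i i * a + cnj a * A i j * b + cnj b * A j i * a + cnj b * A j j * b"
proof -
  let ?v = "\<lambda>k. if k = i then a else if k = j then b else 0"
  have inner: "(\<Sum>l<n. cnj (?v k) * A k l * ?v l) = cnj (?v k) * A k i * a + cnj (?v k) * A k j * b" for k
  proof -
    have "(\<Sum>l<n. cnj (?v k) * A k l * ?v l) =
        (\<Sum>l<n. if l = i then cnj (?v k) * A k i * a else if l = j then cnj (?v k) * A k j * b else 0)"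
      by (rule sum.cong) auto
    then show ?thesis using sum_two_points[OF assms] by simp
  qed
  have "quad_form n A ?v = (\<Sum>k<n. cnj (?v k) * A k i * a + cnj (?v k) * A k j * b)"
    unfolding quad_form_def using inner by simp
  also have "\<dots> = (\<Sum>k<n. if k = i then cnj a * A i i * a + cnj a * A i j * b
      else if k = j then cnj b * A j i * a + cnj b * A j j * b else 0)"
    by (rule sum.cong) (use assms in auto)
  also have "\<dots> = cnj a * A i i * a + cnj a * A i j * b + (cnj b * A j i * a + cnj b * A j j * b)"
    using sum_two_points[OF assms] by simp
  finally show ?thesis by (simp add: algebra_simps)
qed

lemma psd_kernel_diag:
  assumes "psd_kernel n A" "i < n"
  shows "A i i \<in> \<real>" "0 \<le> Re (A i i)"
  using assms quad_form_unit_vector[OF assms(2), of A 1] unfolding psd_kernel_def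
  by (metis mult_1 mult_1_right complex_cnj_one)+

lemma psd_kernel_diag_sqrt:
  assumes "psd_kernel n A" "i < n"
  shows "complex_of_real (sqrt (Re (A i i))) * complex_of_real (sqrt (Re (A i i))) = A i i"
  using psd_kernel_diag[OF assms]
  by (metis abs_of_nonneg of_real_Re of_real_mult real_sqrt_mult_self)

lemma psd_kernel_hermitian:
  assumes "psd_kernel n A" "i < n" "j < n"
  shows "A j i = cnj (A i j)"
proof (cases "i = j")
  case True
  then show ?thesis using psd_kernel_diag(1)[OF assms(1,2)] by (metis Reals_cnj_iff)
next
  case False
  have real: "quad_form n A v \<in> \<real>" for v using assms(1) unfolding psd_kernel_def by blast
  have "A i i \<in> \<real>" "A j j \<in> \<real>" using psd_kernel_diag(1) assms by auto
  moreover have "A i i + A i j + A j i + A j j \<in> \<real>"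
    using real[of "\<lambda>k. if k = i then 1 else if k = j then 1 else 0"]
      quad_form_two_point_vector[OF assms(2,3) False, of A 1 1] by simp
  moreover have "A i i + A i j * \<i> - \<i> * A j i + A j j \<in> \<real>"
    using real[of "\<lambda>k. if k = i then 1 else if k = j then \<i> else 0"]
      quad_form_two_point_vector[OF assms(2,3) False, of A 1 \<i>] by (simp add: algebra_simps)
  ultimately have "Im (A i j + A j i) = 0" "Re (A i j - A j i) = 0"
    by (simp_all add: complex_is_Real_iff)
  then show ?thesis by (simp add: complex_eq_iff)
qed

lemma psd_kernel_zero_diag:
  assumes "psd_kernel n A" "i < n" "j < n" "A j j = 0"
  shows "A i j = 0"
proof (rule ccontr)
  assume nonzero: "A i j \<noteq> 0"
  then have "i \<noteq> j" using assms(4) by auto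
  define c where "c = cmod (A i j) ^ 2"
  define s where "s = (Re (A i i) + 1) / (2 * c)"
  define t where "t = - complex_of_real s * cnj (A i j)"
  have "c > 0" using nonzero unfolding c_def by simp
  have "A j i = cnj (A i j)" using psd_kernel_hermitian[OF assms(1-3)] .
  then have "quad_form n A (\<lambda>k. if k = i then 1 else if k = j then t else 0)
      = A i i - 2 * complex_of_real s * (A i j * cnj (A i j))"
    using quad_form_two_point_vector[OF assms(2,3) \<open>i \<noteq> j\<close>, of A 1 t] assms(4)
    unfolding t_def by (simp add: algebra_simps)
  also have "A i j * cnj (A i j) = complex_of_real c"
    unfolding c_def by (simp add: complex_mult_cnj cmod_def)
  finally have "Re (quad_form n A (\<lambda>k. if k = i then 1 else if k = j then t else 0))
      = Re (A i i) - 2 * s * c"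
    by simp
  also have "\<dots> = -1" unfolding s_def using \<open>c > 0\<close> by (simp add: field_simps)
  finally have "Re (quad_form n A (\<lambda>k. if k = i then 1 else if k = j then t else 0)) = -1" .
  then show False using assms(1) unfolding psd_kernel_def by (metis neg_0_le_iff_le not_one_le_zero)
qed

lemma psd_kernel_restrict:
  assumes "psd_kernel (Suc n) A"
  shows "psd_kernel n A"
  unfolding psd_kernel_def
proof
  fix v :: "nat \<Rightarrow> complex"
  let ?w = "\<lambda>k. if k < n then v k else 0"
  have "quad_form (Suc n) A ?w = quad_form n A ?w" by (simp add: quad_form_Suc)
  also have "\<dots> = quad_form n A v" by (rule quad_form_cong) simp_all
  finally show "quad_form n A v \<in> \<real> \<and> 0 \<le> Re (quad_form n A v)"
    using assms unfolding psd_kernel_def by metis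
qed

lemma psd_kernel_schur_complement:
  assumes "psd_kernel (Suc n) A" "A n n \<noteq> 0"
  shows "psd_kernel n (\<lambda>x y. A x y - A x n * A n y / A n n)"
  unfolding psd_kernel_def
proof
  fix v :: "nat \<Rightarrow> complex"
  define \<alpha> where "\<alpha> = (\<Sum>j<n. A n j * v j)"
  define \<beta> where "\<beta> = (\<Sum>i<n. cnj (v i) * A i n)"
  define t where "t = - \<alpha> / A n n"
  let ?w = "\<lambda>k. if k < n then v k else if k = n then t else 0"
  have "quad_form (Suc n) A ?w = quad_form n A ?w + \<beta> * t + (cnj t * \<alpha> + cnj t * A n n * t)"
    unfolding quad_form_Suc \<alpha>_def \<beta>_def by simp
  also have "quad_form n A ?w = quad_form n A v" by (rule quad_form_cong) simp_all
  also have "cnj t * \<alpha> + cnj t * A n n * t = 0" unfolding t_def using assms(2) by (simp add: field_simps)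
  finally have extended: "quad_form (Suc n) A ?w = quad_form n A v - \<beta> * \<alpha> / A n n"
    unfolding t_def by simp
  have "quad_form n (\<lambda>x y. A x y - A x n * A n y / A n n) v
      = quad_form n A v - (\<Sum>i<n. \<Sum>j<n. cnj (v i) * A i n * (A n j * v j)) / A n n"
    unfolding quad_form_def by (simp add: sum_subtractf sum_divide_distrib algebra_simps)
  also have "(\<Sum>i<n. \<Sum>j<n. cnj (v i) * A i n * (A n j * v j)) = \<beta> * \<alpha>"
    unfolding \<alpha>_def \<beta>_def by (simp add: sum_product)
  finally have "quad_form n (\<lambda>x y. A x y - A x n * A n y / A n n) v = quad_form (Suc n) A ?w"
    unfolding extended .
  then show "quad_form n (\<lambda>x y. A x y - A x n * A n y / A n n) v \<in> \<real> \<and>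
      0 \<le> Re (quad_form n (\<lambda>x y. A x y - A x n * A n y / A n n) v)"
    using assms(1) unfolding psd_kernel_def by metis
qed

lemma psd_kernel_split_last:
  assumes psd: "psd_kernel (Suc n) A"
  obtains c where "psd_kernel n (\<lambda>x y. A x y - c x * cnj (c y))"
    and "\<And>x y. x < Suc n \<Longrightarrow> y < Suc n \<Longrightarrow> x = n \<or> y = n \<Longrightarrow> A x y = c x * cnj (c y)"
proof (cases "A n n = 0")
  case True
  have column: "A x n = 0" if "x < Suc n" for x using psd_kernel_zero_diag[OF psd that _ True] by simp
  have row: "A n x = 0" if "x < Suc n" for x
    using psd_kernel_hermitian[OF psd that, of n] column[OF that] by simp
  have "psd_kernel n (\<lambda>x y. A x y - 0 * cnj 0)" using psd_kernel_restrict[OF psd] by simp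
  moreover have "A x y = 0 * cnj 0" if "x < Suc n" "y < Suc n" "x = n \<or> y = n" for x y
    using that column row by auto
  ultimately show ?thesis using that[of "\<lambda>_. 0"] by blast
next
  case False
  define r where "r = complex_of_real (sqrt (Re (A n n)))"
  define c where "c x = A x n / r" for x
  have "r * r = A n n" unfolding r_def using psd_kernel_diag_sqrt[OF psd, of n] by simp
  then have rank_one: "c x * cnj (c y) = A x n * A n y / A n n" if "y < Suc n" for x y
    using psd_kernel_hermitian[OF psd that, of n] unfolding c_def r_def by simp
  show ?thesis
  proof (rule that)
    have "psd_kernel n (\<lambda>x y. A x y - c x * cnj (c y)) \<longleftrightarrow>
        psd_kernel n (\<lambda>x y. A x y - A x n * A n y / A n n)"
      by (rule psd_kernel_cong) (simp add: rank_one less_SucI)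
    then show "psd_kernel n (\<lambda>x y. A x y - c x * cnj (c y))"
      using psd_kernel_schur_complement[OF psd False] by simp
    show "A x y = c x * cnj (c y)" if "x < Suc n" "y < Suc n" "x = n \<or> y = n" for x y
      using rank_one[OF that(2)] that(3) False by auto
  qed
qed

lemma psd_kernel_gram_decomposition:
  "psd_kernel n A \<Longrightarrow> \<exists>(L::nat) G. \<forall>x<n. \<forall>y<n. A x y = (\<Sum>l<L. G l x * cnj (G l y))"
proof (induction n arbitrary: A)
  case 0
  show ?case by simp
next
  case (Suc n)
  obtain c where psd: "psd_kernel n (\<lambda>x y. A x y - c x * cnj (c y))"
    and last: "\<And>x y. x < Suc n \<Longrightarrow> y < Suc n \<Longrightarrow> x = n \<or> y = n \<Longrightarrow> A x y = c x * cnj (c y)"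
    by (rule psd_kernel_split_last[OF Suc.prems]) blast
  obtain L :: nat and G where G: "\<forall>x<n. \<forall>y<n. A x y - c x * cnj (c y) = (\<Sum>l<L. G l x * cnj (G l y))"
    using Suc.IH[OF psd] by blast
  define G' where "G' l x = (if l < L then if x < n then G l x else 0 else c x)" for l x
  have "A x y = (\<Sum>l<Suc L. G' l x * cnj (G' l y))" if "x < Suc n" "y < Suc n" for x y
  proof (cases "x = n \<or> y = n")
    case True
    have "(\<Sum>l<L. G' l x * cnj (G' l y)) = 0" using True by (auto simp: G'_def intro!: sum.neutral)
    then show ?thesis using last[OF that True] by (simp add: G'_def)
  next
    case False
    then have xy: "x < n" "y < n" using that by auto
    have "(\<Sum>l<L. G' l x * cnj (G' l y)) = (\<Sum>l<L. G l x * cnj (G l y))"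
      using xy by (simp add: G'_def)
    then show ?thesis using G xy by (simp add: G'_def diff_eq_eq)
  qed
  then show ?case by (intro exI[where x="Suc L"] exI[where x=G']) blast
qed

lemma sum_rotate3: "(\<Sum>i\<in>A. \<Sum>j\<in>B. \<Sum>k\<in>C. f i j k) = (\<Sum>j\<in>B. \<Sum>k\<in>C. \<Sum>i\<in>A. f i j k)"
proof -
  have "(\<Sum>i\<in>A. \<Sum>j\<in>B. \<Sum>k\<in>C. f i j k) = (\<Sum>j\<in>B. \<Sum>i\<in>A. \<Sum>k\<in>C. f i j k)" by (rule sum.swap)
  also have "\<dots> = (\<Sum>j\<in>B. \<Sum>k\<in>C. \<Sum>i\<in>A. f i j k)" by (rule sum.cong[OF refl]) (rule sum.swap)
  finally show ?thesis .
qed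

lemma psd_kernel_sum:
  assumes "\<And>l. l < N \<Longrightarrow> psd_kernel n (A l)"
  shows "psd_kernel n (\<lambda>x y. \<Sum>l<N. A l x y)"
proof -
  have "quad_form n (\<lambda>x y. \<Sum>l<N. A l x y) v = (\<Sum>l<N. quad_form n (A l) v)" for v
  proof -
    have "quad_form n (\<lambda>x y. \<Sum>l<N. A l x y) v = (\<Sum>i<n. \<Sum>j<n. \<Sum>l<N. cnj (v i) * A l i j * v j)"
      unfolding quad_form_def by (simp add: sum_distrib_left sum_distrib_right)
    also have "\<dots> = (\<Sum>l<N. quad_form n (A l) v)"
      unfolding quad_form_def by (rule sum_rotate3[symmetric])
    finally show ?thesis .
  qed
  then show ?thesis
    using assms unfolding psd_kernel_def by (auto intro: sum_in_Reals sum_nonneg simp: Re_sum)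
qed

lemma psd_kernel_congruence:
  assumes "psd_kernel n A"
  shows "psd_kernel m (\<lambda>x y. \<Sum>i<n. \<Sum>j<n. cnj (B i x) * A i j * B j y)"
proof -
  have "quad_form m (\<lambda>x y. \<Sum>i<n. \<Sum>j<n. cnj (B i x) * A i j * B j y) v
      = quad_form n A (\<lambda>i. \<Sum>x<m. B i x * v x)" for v
  proof -
    have "quad_form m (\<lambda>x y. \<Sum>i<n. \<Sum>j<n. cnj (B i x) * A i j * B j y) v
        = (\<Sum>x<m. \<Sum>y<m. \<Sum>i<n. \<Sum>j<n. cnj (B i x * v x) * A i j * (B j y * v y))"
      unfolding quad_form_def by (simp add: sum_distrib_left sum_distrib_right mult_ac)
    also have "\<dots> = (\<Sum>x<m. \<Sum>i<n. \<Sum>y<m. \<Sum>j<n. cnj (B i x * v x) * A i j * (B j y * v y))"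
      by (rule sum.cong[OF refl]) (rule sum.swap)
    also have "\<dots> = (\<Sum>i<n. \<Sum>x<m. \<Sum>y<m. \<Sum>j<n. cnj (B i x * v x) * A i j * (B j y * v y))"
      by (rule sum.swap)
    also have "\<dots> = (\<Sum>i<n. \<Sum>j<n. \<Sum>x<m. \<Sum>y<m. cnj (B i x * v x) * A i j * (B j y * v y))"
      by (rule sum.cong[OF refl]) (rule sum_rotate3[symmetric])
    also have "\<dots> = (\<Sum>i<n. \<Sum>j<n. \<Sum>y<m. \<Sum>x<m. cnj (B i x * v x) * A i j * (B j y * v y))"
      by (rule sum.cong[OF refl], rule sum.cong[OF refl], rule sum.swap)
    also have "\<dots> = quad_form n A (\<lambda>i. \<Sum>x<m. B i x * v x)"
      unfolding quad_form_def by (simp add: cnj_sum sum_distrib_left sum_distrib_right)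
    finally show ?thesis .
  qed
  then show ?thesis using assms unfolding psd_kernel_def by simp
qed

section \<open>Matrices diagonal in a unitary basis\<close>

text \<open>Entries of products are expanded by the explicit sums of \<open>index_mult_mat_sum\<close> below.\<close>

declare index_mult_mat(1) [simp del]

lemma index_mult_mat_sum:
  assumes "A \<in> carrier_mat a n" "B \<in> carrier_mat n b" "i < a" "j < b"
  shows "(A * B) $$ (i,j) = (\<Sum>k<n. A $$ (i,k) * B $$ (k,j))"
  using assms by (auto simp: index_mult_mat scalar_prod_def atLeast0LessThan intro!: sum.cong)

lemma index_mult_mult_sum:
  assumes "A \<in> carrier_mat a n" "B \<in> carrier_mat n p" "C \<in> carrier_mat p b" "i < a" "j < b"
  shows "(A * B * C) $$ (i,j) = (\<Sum>x<n. \<Sum>y<p. A $$ (i,x) * B $$ (x,y) * C $$ (y,j))"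
proof -
  have "A * B \<in> carrier_mat a p" using assms by simp
  then have "(A * B * C) $$ (i,j) = (\<Sum>y<p. (A * B) $$ (i,y) * C $$ (y,j))"
    using index_mult_mat_sum assms(3-5) by blast
  also have "\<dots> = (\<Sum>y<p. (\<Sum>x<n. A $$ (i,x) * B $$ (x,y)) * C $$ (y,j))"
    using index_mult_mat_sum[OF assms(1,2) assms(4)] by simp
  also have "\<dots> = (\<Sum>x<n. \<Sum>y<p. A $$ (i,x) * B $$ (x,y) * C $$ (y,j))"
    by (simp add: sum_distrib_right) (rule sum.swap)
  finally show ?thesis .
qed

lemma dim_adj [simp]: "dim_row (adj A) = dim_col A" "dim_col (adj A) = dim_row A"
  unfolding adj_def by simp_all

lemma adj_carrier [simp]: "A \<in> carrier_mat a b \<Longrightarrow> adj A \<in> carrier_mat b a"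
  unfolding adj_def by simp

lemma index_adj [simp]: "i < dim_col A \<Longrightarrow> j < dim_row A \<Longrightarrow> adj A $$ (i,j) = cnj (A $$ (j,i))"
  unfolding adj_def by simp

lemma adj_adj [simp]: "adj (adj A) = A"
  by (rule eq_matI) (auto simp: adj_def)

lemma adj_one [simp]: "adj (1\<^sub>m m) = 1\<^sub>m m"
  by (rule eq_matI) (auto simp: adj_def)

lemma adj_mult:
  assumes "A \<in> carrier_mat a n" "B \<in> carrier_mat n b"
  shows "adj (A * B) = adj B * adj A"
proof (rule eq_matI)
  fix i j assume "i < dim_row (adj B * adj A)" "j < dim_col (adj B * adj A)"
  then have ij: "i < b" "j < a" using assms by auto
  show "adj (A * B) $$ (i,j) = (adj B * adj A) $$ (i,j)"
    using assms ij index_mult_mat_sum[OF assms(1,2) ij(2,1)]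
      index_mult_mat_sum[OF adj_carrier[OF assms(2)] adj_carrier[OF assms(1)] ij]
    by (simp add: cnj_sum mult.commute)
qed (use assms in auto)

lemma adj_mat_diag: "adj (mat_diag m f) = mat_diag m (\<lambda>x. cnj (f x))"
  by (rule eq_matI) (auto simp: adj_def mat_diag_def)

lemma index_mult_mult_adj:
  assumes "A \<in> carrier_mat a n" "M \<in> carrier_mat n n" "r < a" "s < a"
  shows "(A * M * adj A) $$ (r,s) = (\<Sum>x<n. \<Sum>y<n. A $$ (r,x) * M $$ (x,y) * cnj (A $$ (s,y)))"
  using index_mult_mult_sum[OF assms(1,2) adj_carrier[OF assms(1)] assms(3,4)] assms
  by (auto intro!: sum.cong)

lemma sum_index_mult_mult_adj:
  assumes "A \<in> carrier_mat a n" "\<And>l. l < N \<Longrightarrow> M l \<in> carrier_mat n n" "r < a" "s < a"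
  shows "(\<Sum>l<N. (A * M l * adj A) $$ (r,s)) = (A * mat n n (\<lambda>(x,y). \<Sum>l<N. M l $$ (x,y)) * adj A) $$ (r,s)"
proof -
  have "(\<Sum>l<N. (A * M l * adj A) $$ (r,s))
      = (\<Sum>l<N. \<Sum>x<n. \<Sum>y<n. A $$ (r,x) * M l $$ (x,y) * cnj (A $$ (s,y)))"
    by (intro sum.cong refl index_mult_mult_adj[OF assms(1) _ assms(3,4)] assms(2)) simp
  also have "\<dots> = (\<Sum>x<n. \<Sum>y<n. \<Sum>l<N. A $$ (r,x) * M l $$ (x,y) * cnj (A $$ (s,y)))"
    by (rule sum_rotate3)
  also have "\<dots> = (A * mat n n (\<lambda>(x,y). \<Sum>l<N. M l $$ (x,y)) * adj A) $$ (r,s)"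
    by (subst index_mult_mult_adj[OF assms(1) _ assms(3,4)]) (simp_all add: sum_distrib_left sum_distrib_right)
  finally show ?thesis .
qed

definition diag_in_basis :: "complex mat \<Rightarrow> (nat \<Rightarrow> complex) \<Rightarrow> complex mat" where
  "diag_in_basis U f = U * mat_diag (dim_col U) f * adj U"

lemma dim_diag_in_basis [simp]:
  "dim_row (diag_in_basis U f) = dim_row U" "dim_col (diag_in_basis U f) = dim_row U"
  unfolding diag_in_basis_def by simp_all

lemma diag_in_basis_carrier: "U \<in> carrier_mat m m \<Longrightarrow> diag_in_basis U f \<in> carrier_mat m m"
  by (intro carrier_matI) simp_all

lemma index_diag_in_basis:
  assumes "U \<in> carrier_mat m m" "r < m" "s < m"
  shows "diag_in_basis U f $$ (r,s) = (\<Sum>x<m. U $$ (r,x) * f x * cnj (U $$ (s,x)))"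
proof -
  have "diag_in_basis U f = mat m m (\<lambda>(i,j). U $$ (i,j) * f j) * adj U"
    unfolding diag_in_basis_def using assms mat_diag_mult_right[of U m m f] by simp
  then have "diag_in_basis U f $$ (r,s)
      = (\<Sum>x<m. mat m m (\<lambda>(i,j). U $$ (i,j) * f j) $$ (r,x) * adj U $$ (x,s))"
    by (simp only:) (rule index_mult_mat_sum; use assms in simp)
  then show ?thesis using assms by (simp add: mult.assoc)
qed

lemma diag_in_basis_mult_basis:
  assumes "unitary_mat m U"
  shows "diag_in_basis U f * U = U * mat_diag m f"
proof -
  have U: "U \<in> carrier_mat m m" "adj U * U = 1\<^sub>m m" using assms unfolding unitary_mat_def by auto
  have "dim_col U = m" using U by simp
  then have "diag_in_basis U f * U = U * mat_diag m f * adj U * U"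
    unfolding diag_in_basis_def by simp
  also have "\<dots> = U * mat_diag m f * (adj U * U)"
    by (rule assoc_mult_mat[of _ m m _ m _ m]) (use U in auto)
  also have "\<dots> = U * mat_diag m f"
    using U by (simp add: right_mult_one_mat[of "U * mat_diag m f" m m])
  finally show ?thesis .
qed

lemma diag_in_basis_mult:
  assumes "unitary_mat m U"
  shows "diag_in_basis U f * diag_in_basis U g = diag_in_basis U (\<lambda>x. f x * g x)"
proof -
  have U: "U \<in> carrier_mat m m" using assms unfolding unitary_mat_def by auto
  have "diag_in_basis U f * diag_in_basis U g = (diag_in_basis U f * U) * mat_diag m g * adj U"
    unfolding diag_in_basis_def[of _ g] using U
    by (simp add: assoc_mult_mat[of _ m m _ m _ m] diag_in_basis_carrier)
  also have "\<dots> = U * (mat_diag m f * mat_diag m g) * adj U"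
    unfolding diag_in_basis_mult_basis[OF assms] using U by (simp add: assoc_mult_mat[of _ m m _ m _ m])
  finally show ?thesis unfolding diag_in_basis_def using U by simp
qed

lemma diag_in_basis_commute:
  assumes "unitary_mat m U"
  shows "diag_in_basis U f * diag_in_basis U g = diag_in_basis U g * diag_in_basis U f"
  unfolding diag_in_basis_mult[OF assms] by (simp add: mult.commute)

lemma diag_in_basis_one:
  assumes "unitary_mat m U"
  shows "diag_in_basis U (\<lambda>_. 1) = 1\<^sub>m m"
  using assms unfolding unitary_mat_def diag_in_basis_def by auto

lemma adj_diag_in_basis:
  assumes "U \<in> carrier_mat m m"
  shows "adj (diag_in_basis U f) = diag_in_basis U (\<lambda>x. cnj (f x))"
  by (rule eq_matI) (use assms in \<open>auto simp: index_diag_in_basis cnj_sum mult_ac\<close>)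

lemma smult_diag_in_basis:
  assumes "U \<in> carrier_mat m m"
  shows "c \<cdot>\<^sub>m diag_in_basis U f = diag_in_basis U (\<lambda>x. c * f x)"
  by (rule eq_matI) (use assms in \<open>auto simp: index_diag_in_basis sum_distrib_left mult_ac\<close>)

lemma diag_in_basis_pow:
  assumes "unitary_mat m U"
  shows "diag_in_basis U f ^\<^sub>m k = diag_in_basis U (\<lambda>x. f x ^ k)"
proof (induction k)
  case 0
  have "dim_row U = m" using assms unfolding unitary_mat_def by auto
  then show ?case using diag_in_basis_one[OF assms] by simp
next
  case (Suc k)
  then show ?case using diag_in_basis_mult[OF assms] by (simp add: mult.commute)
qed

lemma mexp_diag_in_basis:
  assumes "unitary_mat m U"
  shows "mexp (diag_in_basis U f) = diag_in_basis U (\<lambda>x. exp (f x))"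
proof -
  have U: "U \<in> carrier_mat m m" using assms unfolding unitary_mat_def by auto
  have exp_sums: "(\<lambda>k. z ^ k / of_nat (fact k)) sums exp z" for z :: complex
    using exp_converges[of z] by (simp add: scaleR_conv_of_real divide_inverse_commute)
  show ?thesis
  proof (rule eq_matI)
    fix r s assume "r < dim_row (diag_in_basis U (\<lambda>x. exp (f x)))" "s < dim_col (diag_in_basis U (\<lambda>x. exp (f x)))"
    then have rs: "r < m" "s < m" using U by auto
    have "(\<lambda>k. \<Sum>x<m. U $$ (r,x) * (f x ^ k / of_nat (fact k)) * cnj (U $$ (s,x))) sums
        (\<Sum>x<m. U $$ (r,x) * exp (f x) * cnj (U $$ (s,x)))"
      by (intro sums_sum sums_mult sums_mult2 exp_sums)
    then have "(\<lambda>k. (diag_in_basis U f ^\<^sub>m k) $$ (r,s) / of_nat (fact k)) sums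
        diag_in_basis U (\<lambda>x. exp (f x)) $$ (r,s)"
      unfolding diag_in_basis_pow[OF assms] index_diag_in_basis[OF U rs]
      by (simp add: sum_divide_distrib algebra_simps)
    then show "mexp (diag_in_basis U f) $$ (r,s) = diag_in_basis U (\<lambda>x. exp (f x)) $$ (r,s)"
      unfolding mexp_def using rs U by (simp add: sums_iff)
  qed (use U in \<open>auto simp: mexp_def\<close>)
qed

lemma time_evol_diag_in_basis:
  assumes "unitary_mat m U"
  shows "time_evol (diag_in_basis U e) t = diag_in_basis U (\<lambda>x. exp (- \<i> * complex_of_real t * e x))"
proof -
  have "U \<in> carrier_mat m m" using assms unfolding unitary_mat_def by simp
  then show ?thesis
    unfolding time_evol_def smult_diag_in_basis[OF \<open>U \<in> carrier_mat m m\<close>] mexp_diag_in_basis[OF assms] by simp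
qed

lemma eigenbasis_diag_in_basis:
  assumes H: "H \<in> carrier_mat m m" and U: "unitary_mat m U"
    and eigen: "\<And>x. x < m \<Longrightarrow> H *\<^sub>v col U x = e x \<cdot>\<^sub>v col U x"
  shows "H = diag_in_basis U e"
proof -
  have Uc: "U \<in> carrier_mat m m" "U * adj U = 1\<^sub>m m" using U unfolding unitary_mat_def by auto
  have HU: "H * U = U * mat_diag m e"
  proof (rule eq_matI)
    fix i j assume "i < dim_row (U * mat_diag m e)" "j < dim_col (U * mat_diag m e)"
    then have ij: "i < m" "j < m" using Uc by (auto simp: mat_diag_def)
    have "(H * U) $$ (i,j) = (H *\<^sub>v col U j) $ i" using H Uc ij by (simp add: index_mult_mat)
    also have "\<dots> = U $$ (i,j) * e j" using eigen[OF ij(2)] Uc ij by (simp add: mult.commute)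
    finally show "(H * U) $$ (i,j) = (U * mat_diag m e) $$ (i,j)"
      using Uc ij by (simp add: mat_diag_mult_right[of _ m])
  qed (use H Uc in \<open>auto simp: mat_diag_def\<close>)
  have "H = H * (U * adj U)" using H Uc by simp
  also have "\<dots> = H * U * adj U" using H Uc by (simp add: assoc_mult_mat[of _ m m _ m _ m])
  finally show ?thesis unfolding HU diag_in_basis_def using Uc by simp
qed

section \<open>Channels in Kraus form\<close>

definition kraus_map :: "nat \<Rightarrow> nat \<Rightarrow> (nat \<Rightarrow> complex mat) \<Rightarrow> complex mat \<Rightarrow> complex mat" where
  "kraus_map m N K X = mat m m (\<lambda>(r,s). \<Sum>l<N. (K l * X * adj (K l)) $$ (r,s))"

lemma kraus_map_carrier [simp]: "kraus_map m N K X \<in> carrier_mat m m"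
  unfolding kraus_map_def by simp

lemma dim_kraus_map [simp]: "dim_row (kraus_map m N K X) = m" "dim_col (kraus_map m N K X) = m"
  unfolding kraus_map_def by simp_all

lemma index_kraus_map:
  "r < m \<Longrightarrow> s < m \<Longrightarrow> kraus_map m N K X $$ (r,s) = (\<Sum>l<N. (K l * X * adj (K l)) $$ (r,s))"
  unfolding kraus_map_def by simp

lemma kraus_map_linear:
  assumes K: "\<And>l. l < N \<Longrightarrow> K l \<in> carrier_mat m m" and "X \<in> carrier_mat m m" "Y \<in> carrier_mat m m"
  shows "kraus_map m N K (a \<cdot>\<^sub>m X + b \<cdot>\<^sub>m Y) = a \<cdot>\<^sub>m kraus_map m N K X + b \<cdot>\<^sub>m kraus_map m N K Y"
proof (rule eq_matI)
  fix r s assume "r < dim_row (a \<cdot>\<^sub>m kraus_map m N K X + b \<cdot>\<^sub>m kraus_map m N K Y)"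
    "s < dim_col (a \<cdot>\<^sub>m kraus_map m N K X + b \<cdot>\<^sub>m kraus_map m N K Y)"
  then have rs: "r < m" "s < m" by auto
  have "(K l * (a \<cdot>\<^sub>m X + b \<cdot>\<^sub>m Y) * adj (K l)) $$ (r,s)
      = a * (K l * X * adj (K l)) $$ (r,s) + b * (K l * Y * adj (K l)) $$ (r,s)" if "l < N" for l
    using K[OF that] assms(2,3) rs
    by (simp add: index_mult_mult_adj[of _ m m] algebra_simps sum.distrib sum_distrib_left)
  then show "kraus_map m N K (a \<cdot>\<^sub>m X + b \<cdot>\<^sub>m Y) $$ (r,s)
      = (a \<cdot>\<^sub>m kraus_map m N K X + b \<cdot>\<^sub>m kraus_map m N K Y) $$ (r,s)"
    using rs by (simp add: index_kraus_map sum.distrib sum_distrib_left)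
qed auto

lemma mtrace_mult_mult_adj:
  assumes "K \<in> carrier_mat m m" "X \<in> carrier_mat m m"
  shows "mtrace (K * X * adj K) = (\<Sum>a<m. \<Sum>b<m. X $$ (a,b) * (adj K * K) $$ (b,a))"
proof -
  have "mtrace (K * X * adj K) = (\<Sum>r<m. (K * X * adj K) $$ (r,r))"
    unfolding mtrace_def using assms by simp
  also have "\<dots> = (\<Sum>r<m. \<Sum>a<m. \<Sum>b<m. K $$ (r,a) * X $$ (a,b) * cnj (K $$ (r,b)))"
    by (intro sum.cong refl index_mult_mult_adj[OF assms]) simp_all
  also have "\<dots> = (\<Sum>a<m. \<Sum>b<m. \<Sum>r<m. K $$ (r,a) * X $$ (a,b) * cnj (K $$ (r,b)))"
    by (rule sum_rotate3)
  also have "\<dots> = (\<Sum>a<m. \<Sum>b<m. X $$ (a,b) * (adj K * K) $$ (b,a))"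
    using assms by (simp add: index_mult_mat_sum[of _ m m _ m] sum_distrib_left mult_ac)
  finally show ?thesis .
qed

lemma kraus_map_trace:
  assumes K: "\<And>l. l < N \<Longrightarrow> K l \<in> carrier_mat m m" and X: "X \<in> carrier_mat m m"
    and complete: "\<And>a b. a < m \<Longrightarrow> b < m \<Longrightarrow> (\<Sum>l<N. (adj (K l) * K l) $$ (a,b)) = 1\<^sub>m m $$ (a,b)"
  shows "mtrace (kraus_map m N K X) = mtrace X"
proof -
  have "mtrace (kraus_map m N K X) = (\<Sum>r<m. \<Sum>l<N. (K l * X * adj (K l)) $$ (r,r))"
    unfolding mtrace_def by (simp add: index_kraus_map)
  also have "\<dots> = (\<Sum>l<N. \<Sum>r<m. (K l * X * adj (K l)) $$ (r,r))"
    by (rule sum.swap)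
  also have "\<dots> = (\<Sum>l<N. mtrace (K l * X * adj (K l)))"
  proof (intro sum.cong refl)
    fix l assume "l \<in> {..<N}"
    then have "K l \<in> carrier_mat m m" using K by simp
    then show "(\<Sum>r<m. (K l * X * adj (K l)) $$ (r,r)) = mtrace (K l * X * adj (K l))"
      unfolding mtrace_def by simp
  qed
  also have "\<dots> = (\<Sum>l<N. \<Sum>a<m. \<Sum>b<m. X $$ (a,b) * (adj (K l) * K l) $$ (b,a))"
    using mtrace_mult_mult_adj[OF K X] by simp
  also have "\<dots> = (\<Sum>a<m. \<Sum>b<m. X $$ (a,b) * (\<Sum>l<N. (adj (K l) * K l) $$ (b,a)))"
    unfolding sum_distrib_left by (rule sum_rotate3)
  also have "\<dots> = (\<Sum>a<m. \<Sum>b<m. X $$ (a,b) * 1\<^sub>m m $$ (b,a))"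
    using complete by simp
  also have "\<dots> = (\<Sum>a<m. \<Sum>b<m. if b = a then X $$ (a,a) else 0)"
    by (intro sum.cong refl) simp
  also have "\<dots> = mtrace X"
    unfolding mtrace_def using X by simp
  finally show ?thesis .
qed

lemma mult_conj_mult_adj:
  assumes "A \<in> carrier_mat m m" "B \<in> carrier_mat m m" "X \<in> carrier_mat m m"
  shows "A * (B * X * adj B) * adj A = (A * B) * X * adj (A * B)"
proof -
  have adj: "adj A \<in> carrier_mat m m" "adj B \<in> carrier_mat m m" using assms by auto
  have BX: "B * X \<in> carrier_mat m m" using mult_carrier_mat[OF assms(2,3)] .
  have BXB: "B * X * adj B \<in> carrier_mat m m" using mult_carrier_mat[OF BX adj(2)] .
  have BA: "adj B * adj A \<in> carrier_mat m m" using mult_carrier_mat[OF adj(2,1)] .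
  show ?thesis
    unfolding adj_mult[OF assms(1,2)]
    by (simp only: assoc_mult_mat[OF assms(1) BXB adj(1)] assoc_mult_mat[OF BX adj(2,1)]
        assoc_mult_mat[OF assms(1) BX BA] assoc_mult_mat[OF assms(1,2,3)])
qed

lemma kraus_map_intertwine:
  assumes K: "\<And>l. l < N \<Longrightarrow> K l \<in> carrier_mat m m" and K': "\<And>l. l < N \<Longrightarrow> K' l \<in> carrier_mat m m"
    and V: "V \<in> carrier_mat m m" and X: "X \<in> carrier_mat m m"
    and intertwine: "\<And>l. l < N \<Longrightarrow> K' l * V = V * K l"
  shows "kraus_map m N K' (V * X * adj V) = V * kraus_map m N K X * adj V"
proof (rule eq_matI)
  fix r s assume "r < dim_row (V * kraus_map m N K X * adj V)" "s < dim_col (V * kraus_map m N K X * adj V)"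
  then have rs: "r < m" "s < m" using V by auto
  have conj: "K' l * (V * X * adj V) * adj (K' l) = V * (K l * X * adj (K l)) * adj V" if l: "l < N" for l
  proof -
    have "K' l * (V * X * adj V) * adj (K' l) = (K' l * V) * X * adj (K' l * V)"
      using K'[OF l] V X by (rule mult_conj_mult_adj)
    also have "\<dots> = V * (K l * X * adj (K l)) * adj V"
      unfolding intertwine[OF l] using V K[OF l] X by (rule mult_conj_mult_adj[symmetric])
    finally show ?thesis .
  qed
  have "kraus_map m N K' (V * X * adj V) $$ (r,s) = (\<Sum>l<N. (V * (K l * X * adj (K l)) * adj V) $$ (r,s))"
    using rs by (simp add: index_kraus_map conj)
  also have "\<dots> = (V * kraus_map m N K X * adj V) $$ (r,s)"
    using sum_index_mult_mult_adj[OF V _ rs, of N "\<lambda>l. K l * X * adj (K l)"] K X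
    by (simp add: kraus_map_def mult_carrier_mat[of _ m m _ m])
  finally show "kraus_map m N K' (V * X * adj V) $$ (r,s) = (V * kraus_map m N K X * adj V) $$ (r,s)" .
qed (use V in auto)

text \<open>\<open>id_kron k m K\<close> is \<open>1\<^sub>k \<otimes> K\<close>, in the block indexing of \<open>ext_map\<close>.\<close>

definition id_kron :: "nat \<Rightarrow> nat \<Rightarrow> complex mat \<Rightarrow> complex mat" where
  "id_kron k m K = mat (k*m) (k*m) (\<lambda>(i,j). if i div m = j div m then K $$ (i mod m, j mod m) else 0)"

lemma sum_block:
  fixes a k m :: nat
  assumes "a < k"
  shows "(\<Sum>i<k*m. if i div m = a then f i else 0) = (\<Sum>x<m. f (a*m + x))"
proof -
  have block: "{i. i < k*m \<and> i div m = a} = (\<lambda>x. a*m + x) ` {..<m}"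
  proof (intro equalityI subsetI)
    fix i assume i: "i \<in> {i. i < k*m \<and> i div m = a}"
    then have "0 < m" by (cases m) auto
    then have "i = a*m + i mod m" "i mod m < m" using i by (auto simp: mult.commute)
    then show "i \<in> (\<lambda>x. a*m + x) ` {..<m}" by blast
  next
    fix i assume "i \<in> (\<lambda>x. a*m + x) ` {..<m}"
    then obtain x where x: "x < m" "i = a*m + x" by auto
    have "a*m + x < Suc a * m" using x by simp
    also have "\<dots> \<le> k*m" using assms by (metis Suc_leI mult_le_mono1)
    finally show "i \<in> {i. i < k*m \<and> i div m = a}" using x by simp
  qed
  have "(\<Sum>i<k*m. if i div m = a then f i else 0) = sum f {i. i < k*m \<and> i div m = a}"
    using sum.inter_filter[of "{..<k*m}" f "\<lambda>i. i div m = a"] by simp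
  also have "\<dots> = (\<Sum>x<m. f (a*m + x))" unfolding block by (simp add: sum.reindex)
  finally show ?thesis .
qed

lemma ext_map_congruence:
  assumes K: "K \<in> carrier_mat m m" and X: "X \<in> carrier_mat (k*m) (k*m)"
  shows "ext_map k m (\<lambda>Y. K * Y * adj K) X = id_kron k m K * X * adj (id_kron k m K)"
proof (rule eq_matI)
  fix i j assume "i < dim_row (id_kron k m K * X * adj (id_kron k m K))"
    "j < dim_col (id_kron k m K * X * adj (id_kron k m K))"
  then have ij: "i < k*m" "j < k*m" by (simp_all add: id_kron_def)
  then have "0 < m" by (cases m) auto
  define a r b s where "a = i div m" and "r = i mod m" and "b = j div m" and "s = j mod m"
  have ab: "a < k" "b < k" using ij by (simp_all add: a_def b_def less_mult_imp_div_less)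
  have rs: "r < m" "s < m" using \<open>0 < m\<close> by (simp_all add: r_def s_def)
  have "(id_kron k m K * X * adj (id_kron k m K)) $$ (i,j) = (\<Sum>i'<k*m. \<Sum>j'<k*m.
      id_kron k m K $$ (i,i') * X $$ (i',j') * cnj (id_kron k m K $$ (j,j')))"
    by (rule index_mult_mult_adj) (use ij X in \<open>auto simp: id_kron_def\<close>)
  also have "\<dots> = (\<Sum>i'<k*m. if i' div m = a then \<Sum>j'<k*m. if j' div m = b then
      K $$ (r, i' mod m) * X $$ (i',j') * cnj (K $$ (s, j' mod m)) else 0 else 0)"
  proof (intro sum.cong refl)
    fix i' assume "i' \<in> {..<k*m}"
    then show "(\<Sum>j'<k*m. id_kron k m K $$ (i,i') * X $$ (i',j') * cnj (id_kron k m K $$ (j,j')))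
      = (if i' div m = a then \<Sum>j'<k*m. if j' div m = b then
          K $$ (r, i' mod m) * X $$ (i',j') * cnj (K $$ (s, j' mod m)) else 0 else 0)"
      using ij by (auto simp: id_kron_def a_def b_def r_def s_def intro!: sum.cong)
  qed
  also have "\<dots> = (\<Sum>x<m. \<Sum>y<m. K $$ (r,x) * X $$ (a*m + x, b*m + y) * cnj (K $$ (s,y)))"
    using ab by (simp add: sum_block)
  also have "\<dots> = ext_map k m (\<lambda>Y. K * Y * adj K) X $$ (i,j)"
    unfolding ext_map_def using ij rs K by (simp add: index_mult_mult_adj a_def b_def r_def s_def)
  finally show "ext_map k m (\<lambda>Y. K * Y * adj K) X $$ (i,j) = (id_kron k m K * X * adj (id_kron k m K)) $$ (i,j)"
    by simp
qed (simp_all add: ext_map_def id_kron_def)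

lemma psd_mat_congruence:
  assumes "psd_mat n X" "A \<in> carrier_mat p n"
  shows "psd_mat p (A * X * adj A)"
proof -
  have X: "X \<in> carrier_mat n n" "psd_kernel n (\<lambda>i j. X $$ (i,j))"
    using assms(1) unfolding psd_mat_iff_psd_kernel by auto
  have "psd_kernel p (\<lambda>r s. \<Sum>x<n. \<Sum>y<n. cnj (cnj (A $$ (r,x))) * X $$ (x,y) * cnj (A $$ (s,y)))"
    by (rule psd_kernel_congruence[OF X(2)])
  moreover have "psd_kernel p (\<lambda>r s. \<Sum>x<n. \<Sum>y<n. cnj (cnj (A $$ (r,x))) * X $$ (x,y) * cnj (A $$ (s,y)))
      \<longleftrightarrow> psd_kernel p (\<lambda>r s. (A * X * adj A) $$ (r,s))"
    by (rule psd_kernel_cong) (simp add: index_mult_mult_adj[OF assms(2) X(1)])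
  ultimately have "psd_kernel p (\<lambda>r s. (A * X * adj A) $$ (r,s))" by simp
  then show ?thesis
    unfolding psd_mat_iff_psd_kernel using assms(2) X(1) by auto
qed

lemma kraus_map_completely_positive:
  assumes K: "\<And>l. l < N \<Longrightarrow> K l \<in> carrier_mat m m" and X: "psd_mat (k*m) X"
  shows "psd_mat (k*m) (ext_map k m (kraus_map m N K) X)"
proof -
  have Xc: "X \<in> carrier_mat (k*m) (k*m)" using X unfolding psd_mat_def by simp
  have entry: "ext_map k m (kraus_map m N K) X $$ (i,j)
      = (\<Sum>l<N. (id_kron k m (K l) * X * adj (id_kron k m (K l))) $$ (i,j))"
    if "i < k*m" "j < k*m" for i j
  proof -
    have "0 < m" using that by (cases m) auto
    then have "ext_map k m (kraus_map m N K) X $$ (i,j) = (\<Sum>l<N. ext_map k m (\<lambda>Y. K l * Y * adj (K l)) X $$ (i,j))"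
      using that by (simp add: ext_map_def index_kraus_map)
    then show ?thesis using K Xc by (simp add: ext_map_congruence)
  qed
  have "psd_kernel (k*m) (\<lambda>i j. (id_kron k m (K l) * X * adj (id_kron k m (K l))) $$ (i,j))" if "l < N" for l
    using psd_mat_congruence[OF X, of "id_kron k m (K l)"] unfolding psd_mat_iff_psd_kernel
    by (simp add: id_kron_def)
  then have "psd_kernel (k*m) (\<lambda>i j. \<Sum>l<N. (id_kron k m (K l) * X * adj (id_kron k m (K l))) $$ (i,j))"
    by (rule psd_kernel_sum)
  moreover have "psd_kernel (k*m) (\<lambda>i j. \<Sum>l<N. (id_kron k m (K l) * X * adj (id_kron k m (K l))) $$ (i,j))
      \<longleftrightarrow> psd_kernel (k*m) (\<lambda>i j. ext_map k m (kraus_map m N K) X $$ (i,j))"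
    by (rule psd_kernel_cong) (simp add: entry)
  ultimately have "psd_kernel (k*m) (\<lambda>i j. ext_map k m (kraus_map m N K) X $$ (i,j))" by simp
  then show ?thesis unfolding psd_mat_iff_psd_kernel by (simp add: ext_map_def)
qed

lemma channel_kraus_map:
  assumes "\<And>l. l < N \<Longrightarrow> K l \<in> carrier_mat m m"
    and "\<And>a b. a < m \<Longrightarrow> b < m \<Longrightarrow> (\<Sum>l<N. (adj (K l) * K l) $$ (a,b)) = 1\<^sub>m m $$ (a,b)"
  shows "channel m (kraus_map m N K)"
  unfolding channel_def
  using kraus_map_linear kraus_map_trace kraus_map_completely_positive assms by auto

section \<open>The covariant channel\<close>

lemma ket_bra_mult_mat_vec:
  assumes "A \<in> carrier_mat n k" "v \<in> carrier_vec k"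
  shows "ket_bra (A *\<^sub>v v) = A * ket_bra v * adj A"
proof (rule eq_matI)
  fix r s assume "r < dim_row (A * ket_bra v * adj A)" "s < dim_col (A * ket_bra v * adj A)"
  then have rs: "r < n" "s < n" using assms by auto
  have "ket_bra (A *\<^sub>v v) $$ (r,s) = (\<Sum>x<k. A $$ (r,x) * v $ x) * cnj (\<Sum>y<k. A $$ (s,y) * v $ y)"
    using assms rs by (simp add: ket_bra_def scalar_prod_def atLeast0LessThan)
  also have "\<dots> = (A * ket_bra v * adj A) $$ (r,s)"
    using assms rs
    by (simp add: index_mult_mult_adj[of _ n k] ket_bra_def sum_product cnj_sum mult_ac)
  finally show "ket_bra (A *\<^sub>v v) $$ (r,s) = (A * ket_bra v * adj A) $$ (r,s)" .
qed (use assms in \<open>auto simp: ket_bra_def\<close>)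

lemma mat_diag_conj:
  assumes "X \<in> carrier_mat m m"
  shows "mat_diag m f * X * adj (mat_diag m f) = mat m m (\<lambda>(x,y). f x * X $$ (x,y) * cnj (f y))"
  by (rule eq_matI) (use assms in \<open>auto simp: adj_mat_diag mat_diag_mult_left mat_diag_mult_right[of _ m m]\<close>)

lemma diag_kraus_complete:
  assumes U: "unitary_mat m U" and normalized: "\<And>x. x < m \<Longrightarrow> (\<Sum>l<N. cnj (h l x) * h l x) = 1"
    and ab: "a < m" "b < m"
  shows "(\<Sum>l<N. (adj (diag_in_basis U (h l)) * diag_in_basis U (h l)) $$ (a,b)) = 1\<^sub>m m $$ (a,b)"
proof -
  have Uc: "U \<in> carrier_mat m m" using U unfolding unitary_mat_def by simp
  have "(\<Sum>l<N. (adj (diag_in_basis U (h l)) * diag_in_basis U (h l)) $$ (a,b))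
      = (\<Sum>l<N. \<Sum>x<m. U $$ (a,x) * (cnj (h l x) * h l x) * cnj (U $$ (b,x)))"
    by (simp add: adj_diag_in_basis[OF Uc] diag_in_basis_mult[OF U] index_diag_in_basis[OF Uc ab])
  also have "\<dots> = (\<Sum>x<m. U $$ (a,x) * (\<Sum>l<N. cnj (h l x) * h l x) * cnj (U $$ (b,x)))"
    by (subst sum.swap) (simp add: sum_distrib_left sum_distrib_right)
  also have "\<dots> = diag_in_basis U (\<lambda>_. 1) $$ (a,b)"
    using normalized by (simp add: index_diag_in_basis[OF Uc ab])
  finally show ?thesis unfolding diag_in_basis_one[OF U] .
qed

lemma channel_diag_kraus:
  assumes "unitary_mat m U" "\<And>x. x < m \<Longrightarrow> (\<Sum>l<N. cnj (h l x) * h l x) = 1"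
  shows "channel m (kraus_map m N (\<lambda>l. diag_in_basis U (h l)))"
  using assms diag_kraus_complete[OF assms] diag_in_basis_carrier
  by (intro channel_kraus_map) (auto simp: unitary_mat_def)

lemma time_cov_diag_kraus:
  assumes U: "unitary_mat m U"
  shows "time_cov m (diag_in_basis U e) (kraus_map m N (\<lambda>l. diag_in_basis U (h l)))"
  unfolding time_cov_def
proof (intro allI impI)
  fix t \<rho> assume "density_mat m \<rho>"
  then have "\<rho> \<in> carrier_mat m m" unfolding density_mat_def psd_mat_def by simp
  moreover have "U \<in> carrier_mat m m" using U unfolding unitary_mat_def by simp
  ultimately show "kraus_map m N (\<lambda>l. diag_in_basis U (h l))
      (time_evol (diag_in_basis U e) t * \<rho> * adj (time_evol (diag_in_basis U e) t))
    = time_evol (diag_in_basis U e) t * kraus_map m N (\<lambda>l. diag_in_basis U (h l)) \<rho>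
      * adj (time_evol (diag_in_basis U e) t)"
    unfolding time_evol_diag_in_basis[OF U]
    by (intro kraus_map_intertwine diag_in_basis_carrier diag_in_basis_commute[OF U])
qed

lemma diag_kraus_ket_bra:
  assumes U: "unitary_mat m U"
  shows "kraus_map m N (\<lambda>l. diag_in_basis U (h l)) (ket_bra (U *\<^sub>v vec m c))
    = U * mat m m (\<lambda>(x,y). \<Sum>l<N. h l x * c x * cnj (h l y * c y)) * adj U"
proof -
  have Uc: "U \<in> carrier_mat m m" using U unfolding unitary_mat_def by simp
  have "kraus_map m N (\<lambda>l. diag_in_basis U (h l)) (ket_bra (U *\<^sub>v vec m c))
      = U * kraus_map m N (\<lambda>l. mat_diag m (h l)) (ket_bra (vec m c)) * adj U"
    unfolding ket_bra_mult_mat_vec[OF Uc vec_carrier]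
    by (rule kraus_map_intertwine) (auto simp: Uc diag_in_basis_carrier diag_in_basis_mult_basis[OF U] ket_bra_def)
  also have "kraus_map m N (\<lambda>l. mat_diag m (h l)) (ket_bra (vec m c))
      = mat m m (\<lambda>(x,y). \<Sum>l<N. h l x * c x * cnj (h l y * c y))"
    by (rule eq_matI) (auto simp: index_kraus_map mat_diag_conj ket_bra_def mult_ac intro!: sum.cong)
  finally show ?thesis .
qed

lemma psd_kernel_normalized_gram:
  assumes psd: "psd_kernel m S"
  defines "s x \<equiv> complex_of_real (sqrt (Re (S x x)))"
  obtains N :: nat and h where "\<And>x. x < m \<Longrightarrow> (\<Sum>l<N. cnj (h l x) * h l x) = 1"
    and "\<And>x y. x < m \<Longrightarrow> y < m \<Longrightarrow> (\<Sum>l<N. h l x * s x * cnj (h l y * s y)) = S x y"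
proof -
  obtain L :: nat and G where G: "\<forall>x<m. \<forall>y<m. S x y = (\<Sum>l<L. G l x * cnj (G l y))"
    using psd_kernel_gram_decomposition[OF psd] by (elim exE) (erule that)
  have ss: "s x * s x = S x x" if "x < m" for x
    unfolding s_def using psd_kernel_diag_sqrt[OF psd that] .
  have cnj_s: "cnj (s x) = s x" for x unfolding s_def by simp
  have vanish: "S x y = 0" if "x < m" "y < m" "s x = 0 \<or> s y = 0" for x y
    using that ss psd_kernel_zero_diag[OF psd] psd_kernel_hermitian[OF psd] by (metis complex_cnj_zero mult_zero_left)
  text \<open>Where \<open>s x = 0\<close> the quotients below are \<open>0\<close> (division by zero in HOL), and the extra
    index \<open>L\<close> supplies the missing weight.\<close>
  define h where "h l x = (if l < L then G l x / s x else of_bool (s x = 0))" for l x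
  show ?thesis
  proof (rule that[where N="Suc L" and h=h])
    fix x assume x: "x < m"
    show "(\<Sum>l<Suc L. cnj (h l x) * h l x) = 1"
    proof (cases "s x = 0")
      case True
      then show ?thesis by (simp add: h_def)
    next
      case False
      have "(\<Sum>l<L. cnj (h l x) * h l x) = (\<Sum>l<L. G l x * cnj (G l x)) / (s x * s x)"
        using cnj_s by (simp add: h_def sum_divide_distrib mult_ac)
      also have "(\<Sum>l<L. G l x * cnj (G l x)) = s x * s x" using G x ss[OF x] by simp
      also have "s x * s x / (s x * s x) = 1" using False by simp
      finally show ?thesis using False by (simp add: h_def)
    qed
  next
    fix x y assume xy: "x < m" "y < m"
    show "(\<Sum>l<Suc L. h l x * s x * cnj (h l y * s y)) = S x y"
    proof (cases "s x = 0 \<or> s y = 0")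
      case True
      then show ?thesis using vanish[OF xy True] by auto
    next
      case False
      then show ?thesis using G xy cnj_s by (simp add: h_def)
    qed
  qed
qed

lemma unitary_conj_cancel:
  assumes "unitary_mat m U" "X \<in> carrier_mat m m"
  shows "U * (adj U * X * U) * adj U = X"
proof -
  have U: "U \<in> carrier_mat m m" "U * adj U = 1\<^sub>m m" using assms(1) unfolding unitary_mat_def by auto
  have "U * (adj U * X * U) * adj U = (U * adj U) * X * adj (U * adj U)"
    using mult_conj_mult_adj[OF U(1) adj_carrier[OF U(1)] assms(2)] unfolding adj_adj .
  also have "\<dots> = X" using assms(2) unfolding U(2) adj_one by simp
  finally show ?thesis .
qed

theorem corollary1:
  fixes m :: nat and H U \<sigma> :: "complex mat"
  assumes "hermitian_mat m H"
    and "unitary_mat m U"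
    and "\<forall>x<m. \<exists>e. H *\<^sub>v col U x = e \<cdot>\<^sub>v col U x"
    and "density_mat m \<sigma>"
  shows "let p = (\<lambda>x. \<Sum>i<m. \<Sum>j<m. cnj (U $$ (i,x)) * \<sigma> $$ (i,j) * U $$ (j,x));
             \<psi> = vec m (\<lambda>i. \<Sum>x<m. complex_of_real (sqrt (Re (p x))) * U $$ (i,x))
         in \<exists>\<E>. channel m \<E> \<and> time_cov m H \<E> \<and> \<E> (ket_bra \<psi>) = \<sigma>"
proof -
  have U: "U \<in> carrier_mat m m" using assms(2) unfolding unitary_mat_def by simp
  have \<sigma>: "\<sigma> \<in> carrier_mat m m" "psd_kernel m (\<lambda>i j. \<sigma> $$ (i,j))"
    using assms(4) unfolding density_mat_def psd_mat_iff_psd_kernel by auto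
  obtain e where "\<And>x. x < m \<Longrightarrow> H *\<^sub>v col U x = e x \<cdot>\<^sub>v col U x" using assms(3) by metis
  then have H_diag: "H = diag_in_basis U e"
    using assms(1,2) eigenbasis_diag_in_basis unfolding hermitian_mat_def by blast
  define S where "S x y = (\<Sum>i<m. \<Sum>j<m. cnj (U $$ (i,x)) * \<sigma> $$ (i,j) * U $$ (j,y))" for x y
  define s where "s x = complex_of_real (sqrt (Re (S x x)))" for x
  have "psd_kernel m S" unfolding S_def by (rule psd_kernel_congruence[OF \<sigma>(2)])
  then obtain N :: nat and h where normalized: "\<And>x. x < m \<Longrightarrow> (\<Sum>l<N. cnj (h l x) * h l x) = 1"
    and gram: "\<And>x y. x < m \<Longrightarrow> y < m \<Longrightarrow> (\<Sum>l<N. h l x * s x * cnj (h l y * s y)) = S x y"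
    unfolding s_def by (rule psd_kernel_normalized_gram) blast
  have middle: "mat m m (\<lambda>(x,y). \<Sum>l<N. h l x * s x * cnj (h l y * s y)) = adj U * \<sigma> * U"
    by (rule eq_matI) (use U \<sigma> in \<open>auto simp: gram S_def index_mult_mult_sum[of _ m m _ m _ m]
      simp del: complex_cnj_mult\<close>)
  define \<E> where "\<E> = kraus_map m N (\<lambda>l. diag_in_basis U (h l))"
  have "\<E> (ket_bra (U *\<^sub>v vec m s)) = \<sigma>"
    unfolding \<E>_def diag_kraus_ket_bra[OF assms(2)] middle by (rule unitary_conj_cancel[OF assms(2) \<sigma>(1)])
  moreover have "channel m \<E>" unfolding \<E>_def by (rule channel_diag_kraus[OF assms(2) normalized])
  moreover have "time_cov m H \<E>" unfolding \<E>_def H_diag by (rule time_cov_diag_kraus[OF assms(2)])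
  moreover have "vec m (\<lambda>i. \<Sum>x<m. s x * U $$ (i,x)) = U *\<^sub>v vec m s"
    using U by (auto simp: scalar_prod_def atLeast0LessThan mult.commute intro!: sum.cong)
  ultimately show ?thesis
    unfolding Let_def S_def[symmetric] s_def[symmetric] by (intro exI[where x=\<E>]) simp
qed

end
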